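(* Let $G$ be an $r$-regular finite simple graph of order $n$, $r\ge 1$. If $r$ is even, then $$\frac{1-r}{1+r}\,n\le \gamma^{0}_{st}(G)\le 0,$$ and if $r$ is odd, then $$-\frac{r^2+1}{r^2+2r-1}\,n\le \gamma^{0}_{st}(G)\le -\frac{n}{r}.$$
   Context: For a vertex $v$ of a graph $G=(V,E)$, $N(v)$ is its open neighborhood, and for $f:V\to\mathbb{R}$ and $B\subseteq V$ write $f(B)=\sum_{v\in B}f(v)$; $f(V)$ is the weight of $f$. An inverse signed total dominating function (ISTDF) of $G$ is a function $f:V\to\{-1,1\}$ such that $f(N(v))\le 0$ for every $v\in V$. The inverse signed total domination number $\gamma^{0}_{st}(G)$ is the maximum weight of an ISTDF of $G$. *)

theory Defs
  imports Complex_Main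
begin

definition simple_graph :: "'a set \<Rightarrow> ('a \<Rightarrow> 'a \<Rightarrow> bool) \<Rightarrow> bool" where
  "simple_graph V E \<longleftrightarrow> finite V \<and> (\<forall>u v. E u v \<longrightarrow> u \<in> V \<and> v \<in> V)
     \<and> (\<forall>u v. E u v \<longrightarrow> E v u) \<and> (\<forall>v. \<not> E v v)"

definition nbhd :: "'a set \<Rightarrow> ('a \<Rightarrow> 'a \<Rightarrow> bool) \<Rightarrow> 'a \<Rightarrow> 'a set" where
  "nbhd V E v = {u \<in> V. E v u}"

definition regular :: "'a set \<Rightarrow> ('a \<Rightarrow> 'a \<Rightarrow> bool) \<Rightarrow> nat \<Rightarrow> bool" where
  "regular V E r \<longleftrightarrow> (\<forall>v\<in>V. card (nbhd V E v) = r)"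

text \<open>Inverse signed total dominating function; only the values on V matter.\<close>
definition istdf :: "'a set \<Rightarrow> ('a \<Rightarrow> 'a \<Rightarrow> bool) \<Rightarrow> ('a \<Rightarrow> int) \<Rightarrow> bool" where
  "istdf V E f \<longleftrightarrow> (\<forall>v\<in>V. f v = -1 \<or> f v = 1)
     \<and> (\<forall>v\<in>V. (\<Sum>u\<in>nbhd V E v. f u) \<le> 0)"

definition istd_number :: "'a set \<Rightarrow> ('a \<Rightarrow> 'a \<Rightarrow> bool) \<Rightarrow> int" where
  "istd_number V E = Max {(\<Sum>v\<in>V. f v) | f. istdf V E f}"

end

theory Submission
  imports Defs
begin

text \<open>
  Upper bounds: summing \<open>f(N(v)) \<le> 0\<close> over all \<open>v\<close> counts every value \<open>r\<close> times,
  so \<open>r f(V) \<le> 0\<close>; for odd \<open>r\<close> each \<open>f(N(v))\<close> is odd, hence \<open>\<le> -1\<close>, and \<open>r f(V) \<le> -n\<close>.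

  Lower bounds: let \<open>f\<close> be an ISTDF of maximum weight with positive set \<open>P\<close> and negative
  set \<open>M\<close>. Raising a negative vertex to \<open>+1\<close> must violate some constraint, so every
  vertex of \<open>M\<close> lies in \<open>N(u)\<close> for a tight vertex \<open>u\<close>, i.e. \<open>f(N(u)) \<in> {-1, 0}\<close>.
  At a tight vertex the neighbours split as evenly as parity allows between \<open>P\<close> and \<open>M\<close>.
  Counting edges between \<open>M\<close>, the tight vertices and \<open>P\<close> gives \<open>|M| \<le> r|P|\<close> for even
  \<open>r\<close> and \<open>(r-1)|M| \<le> r(r+1)|P|\<close> for odd \<open>r\<close>; with \<open>n = |P| + |M|\<close> and
  \<open>f(V) = |P| - |M|\<close> these are exactly the stated bounds.
\<close>

lemma simple_graph_finite: "simple_graph V E \<Longrightarrow> finite V"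
  by (simp add: simple_graph_def)

lemma finite_nbhd: "simple_graph V E \<Longrightarrow> finite (nbhd V E v)"
  by (simp add: simple_graph_def nbhd_def)

lemma nbhd_subset: "nbhd V E v \<subseteq> V"
  by (auto simp: nbhd_def)

lemma sum_nbhd_swap:
  assumes g: "simple_graph V E" and A: "A \<subseteq> V" and B: "B \<subseteq> V"
  shows "(\<Sum>u\<in>A. \<Sum>w\<in>nbhd V E u \<inter> B. h u w) = (\<Sum>w\<in>B. \<Sum>u\<in>nbhd V E w \<inter> A. h u w)"
proof -
  have fA: "finite A" and fB: "finite B"
    using A B simple_graph_finite[OF g] finite_subset by auto
  have sym: "E u w \<longleftrightarrow> E w u" for u w
    using g unfolding simple_graph_def by blast
  have "(\<Sum>u\<in>A. \<Sum>w\<in>nbhd V E u \<inter> B. h u w) = (\<Sum>u\<in>A. \<Sum>w\<in>B. if E u w then h u w else 0)"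
  proof (rule sum.cong[OF refl])
    fix u assume "u \<in> A"
    have "nbhd V E u \<inter> B = {w\<in>B. E u w}" using B by (auto simp: nbhd_def)
    then show "(\<Sum>w\<in>nbhd V E u \<inter> B. h u w) = (\<Sum>w\<in>B. if E u w then h u w else 0)"
      using fB by (simp add: sum.inter_filter)
  qed
  also have "\<dots> = (\<Sum>w\<in>B. \<Sum>u\<in>A. if E u w then h u w else 0)"
    by (rule sum.swap)
  also have "\<dots> = (\<Sum>w\<in>B. \<Sum>u\<in>nbhd V E w \<inter> A. h u w)"
  proof (rule sum.cong[OF refl])
    fix w assume "w \<in> B"
    have "nbhd V E w \<inter> A = {u\<in>A. E u w}" using A sym by (auto simp: nbhd_def)
    then show "(\<Sum>u\<in>A. if E u w then h u w else 0) = (\<Sum>u\<in>nbhd V E w \<inter> A. h u w)"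
      using fA by (simp add: sum.inter_filter)
  qed
  finally show ?thesis .
qed

lemma regular_sum_nbhd_sums:
  assumes g: "simple_graph V E" and reg: "regular V E r"
  shows "(\<Sum>u\<in>V. \<Sum>w\<in>nbhd V E u. (f w :: int)) = int r * (\<Sum>w\<in>V. f w)"
proof -
  have "(\<Sum>u\<in>V. \<Sum>w\<in>nbhd V E u. f w) = (\<Sum>w\<in>V. \<Sum>u\<in>nbhd V E w. f w)"
    using sum_nbhd_swap[OF g subset_refl subset_refl, of "\<lambda>_ w. f w"]
    by (simp add: Int_absorb2 nbhd_subset)
  also have "\<dots> = (\<Sum>w\<in>V. int r * f w)"
    using reg by (intro sum.cong) (auto simp: regular_def)
  finally show ?thesis by (simp add: sum_distrib_left)
qed

lemma sum_plus_minus_one: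
  assumes "finite S" and "\<forall>x\<in>S. f x = 1 \<or> f x = (-1 :: int)"
  shows "(\<Sum>x\<in>S. f x) = int (card {x\<in>S. f x = 1}) - int (card {x\<in>S. f x = -1})"
    and "card S = card {x\<in>S. f x = 1} + card {x\<in>S. f x = -1}"
proof -
  have split: "S = {x\<in>S. f x = 1} \<union> {x\<in>S. f x = -1}" using assms(2) by auto
  have disj: "{x\<in>S. f x = 1} \<inter> {x\<in>S. f x = -1} = {}" by auto
  have "(\<Sum>x\<in>S. f x) = (\<Sum>x\<in>{x\<in>S. f x = 1}. f x) + (\<Sum>x\<in>{x\<in>S. f x = -1}. f x)"
    by (subst split, rule sum.union_disjoint) (use assms(1) disj in auto)
  then show "(\<Sum>x\<in>S. f x) = int (card {x\<in>S. f x = 1}) - int (card {x\<in>S. f x = -1})"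
    by simp
  show "card S = card {x\<in>S. f x = 1} + card {x\<in>S. f x = -1}"
    by (subst split, rule card_Un_disjoint) (use assms(1) disj in auto)
qed

lemma istdf_plus_minus_one: "istdf V E f \<Longrightarrow> v \<in> V \<Longrightarrow> f v = 1 \<or> f v = -1"
  by (auto simp: istdf_def)

lemma regular_istdf_weight_nonpos:
  assumes g: "simple_graph V E" and reg: "regular V E r" and f: "istdf V E f"
  shows "int r * (\<Sum>v\<in>V. f v) \<le> 0"
  unfolding regular_sum_nbhd_sums[OF g reg, symmetric]
  by (rule sum_nonpos) (use f in \<open>simp add: istdf_def\<close>)

lemma regular_odd_istdf_weight_le:
  assumes g: "simple_graph V E" and reg: "regular V E r" and f: "istdf V E f" and "odd r"
  shows "int r * (\<Sum>v\<in>V. f v) \<le> - int (card V)"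
proof -
  have "(\<Sum>w\<in>nbhd V E u. f w) \<le> -1" if u: "u \<in> V" for u
  proof -
    have pm: "\<forall>w\<in>nbhd V E u. f w = 1 \<or> f w = -1"
      using f by (auto simp: istdf_def nbhd_def)
    note parts = sum_plus_minus_one[OF finite_nbhd[OF g] pm]
    have odd_diff: "odd (int a - int b)" if "odd (a + b)" for a b :: nat
      using that by presburger
    have "card (nbhd V E u) = r" using reg u by (simp add: regular_def)
    with parts(2) \<open>odd r\<close> have "odd (\<Sum>w\<in>nbhd V E u. f w)"
      unfolding parts(1) by (intro odd_diff) simp
    then have "(\<Sum>w\<in>nbhd V E u. f w) \<noteq> 0" by auto
    moreover have "(\<Sum>w\<in>nbhd V E u. f w) \<le> 0" using f u by (simp add: istdf_def)
    ultimately show ?thesis by linarith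
  qed
  then have "(\<Sum>u\<in>V. \<Sum>w\<in>nbhd V E u. f w) \<le> (\<Sum>u\<in>V. -1)"
    by (intro sum_mono) auto
  then show ?thesis by (simp add: regular_sum_nbhd_sums[OF g reg])
qed

lemma istd_number_attained:
  assumes "simple_graph V E"
  obtains f where "istdf V E f" and "istd_number V E = (\<Sum>v\<in>V. f v)"
    and "\<And>h. istdf V E h \<Longrightarrow> (\<Sum>v\<in>V. h v) \<le> (\<Sum>v\<in>V. f v)"
proof -
  let ?W = "{(\<Sum>v\<in>V. f v) | f. istdf V E f}"
  have "?W \<subseteq> {- int (card V) .. int (card V)}"
  proof
    fix x assume "x \<in> ?W"
    then obtain f where x: "x = (\<Sum>v\<in>V. f v)" and f: "istdf V E f" by blast
    have pm: "f v = 1 \<or> f v = -1" if "v \<in> V" for v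
      using istdf_plus_minus_one[OF f that] .
    have "(\<Sum>v\<in>V. -1) \<le> (\<Sum>v\<in>V. f v)" "(\<Sum>v\<in>V. f v) \<le> (\<Sum>v\<in>V. 1)"
      by (rule sum_mono, use pm in fastforce)+
    then show "x \<in> {- int (card V) .. int (card V)}" using x by simp
  qed
  then have fin: "finite ?W" by (rule finite_subset) simp
  have "istdf V E (\<lambda>_. -1)" by (simp add: istdf_def)
  then have ne: "?W \<noteq> {}" by blast
  obtain f where f: "istdf V E f" and w: "istd_number V E = (\<Sum>v\<in>V. f v)"
    using Max_in[OF fin ne] unfolding istd_number_def by blast
  have "(\<Sum>v\<in>V. h v) \<le> (\<Sum>v\<in>V. f v)" if "istdf V E h" for h
  proof -
    have "(\<Sum>v\<in>V. h v) \<in> ?W" using that by blast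
    then have "(\<Sum>v\<in>V. h v) \<le> Max ?W" by (rule Max_ge[OF fin])
    then show ?thesis using w by (simp add: istd_number_def)
  qed
  with f w show thesis by (rule that)
qed

definition tight :: "'a set \<Rightarrow> ('a \<Rightarrow> 'a \<Rightarrow> bool) \<Rightarrow> ('a \<Rightarrow> int) \<Rightarrow> 'a \<Rightarrow> bool" where
  "tight V E f u \<longleftrightarrow> u \<in> V \<and> -1 \<le> (\<Sum>w\<in>nbhd V E u. f w)"

lemma sum_update_member:
  fixes f :: "'a \<Rightarrow> 'b :: ab_group_add"
  assumes "finite S" and "v \<in> S"
  shows "(\<Sum>w\<in>S. (f(v := c)) w) = (\<Sum>w\<in>S. f w) + (c - f v)"
proof -
  have "(\<Sum>w\<in>S - {v}. (f(v := c)) w) = (\<Sum>w\<in>S - {v}. f w)"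
    by (rule sum.cong) auto
  then show ?thesis using assms by (simp add: sum.remove[of S v] algebra_simps)
qed

lemma max_istdf_negative_in_tight_nbhd:
  assumes g: "simple_graph V E" and f: "istdf V E f"
    and max: "\<And>h. istdf V E h \<Longrightarrow> (\<Sum>v\<in>V. h v) \<le> (\<Sum>v\<in>V. f v)"
    and v: "v \<in> V" "f v = -1"
  shows "\<exists>u. tight V E f u \<and> v \<in> nbhd V E u"
proof -
  let ?h = "f(v := 1)"
  have "(\<Sum>w\<in>V. ?h w) = (\<Sum>w\<in>V. f w) + (1 - f v)"
    by (rule sum_update_member[OF simple_graph_finite[OF g] v(1)])
  then have "(\<Sum>w\<in>V. ?h w) = (\<Sum>w\<in>V. f w) + 2" using v(2) by simp
  then have "\<not> istdf V E ?h" using max by fastforce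
  moreover have "\<forall>w\<in>V. ?h w = -1 \<or> ?h w = 1" using f by (simp add: istdf_def)
  ultimately obtain u where u: "u \<in> V" and pos: "0 < (\<Sum>w\<in>nbhd V E u. ?h w)"
    by (auto simp: istdf_def not_le)
  have nonpos: "(\<Sum>w\<in>nbhd V E u. f w) \<le> 0" using f u by (simp add: istdf_def)
  show ?thesis
  proof (cases "v \<in> nbhd V E u")
    case True
    have "(\<Sum>w\<in>nbhd V E u. ?h w) = (\<Sum>w\<in>nbhd V E u. f w) + (1 - f v)"
      by (rule sum_update_member[OF finite_nbhd[OF g] True])
    with pos v(2) u True show ?thesis by (auto simp: tight_def)
  next
    case False
    then have "(\<Sum>w\<in>nbhd V E u. ?h w) = (\<Sum>w\<in>nbhd V E u. f w)"
      by (intro sum.cong) auto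
    with pos nonpos show ?thesis by simp
  qed
qed

lemma tight_nbhd_split:
  assumes g: "simple_graph V E" and reg: "regular V E r" and f: "istdf V E f"
    and u: "tight V E f u"
  defines "p \<equiv> card {w\<in>nbhd V E u. f w = 1}" and "m \<equiv> card {w\<in>nbhd V E u. f w = -1}"
  shows "p + m = r" and "p \<le> m" and "m \<le> p + 1"
proof -
  have uV: "u \<in> V" and ge: "-1 \<le> (\<Sum>w\<in>nbhd V E u. f w)" using u by (auto simp: tight_def)
  have le: "(\<Sum>w\<in>nbhd V E u. f w) \<le> 0" using f uV by (simp add: istdf_def)
  have pm: "\<forall>w\<in>nbhd V E u. f w = 1 \<or> f w = -1"
    using f by (auto simp: istdf_def nbhd_def)
  note parts = sum_plus_minus_one[OF finite_nbhd[OF g] pm, folded p_def m_def]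
  show "p + m = r" using parts(2) reg uV by (simp add: regular_def)
  show "p \<le> m" and "m \<le> p + 1" using parts(1) ge le by linarith+
qed

lemma max_istdf_count:
  assumes g: "simple_graph V E" and reg: "regular V E r" and f: "istdf V E f"
    and max: "\<And>h. istdf V E h \<Longrightarrow> (\<Sum>v\<in>V. h v) \<le> (\<Sum>v\<in>V. f v)"
    and local: "\<And>u. tight V E f u \<Longrightarrow>
      a * card {w\<in>nbhd V E u. f w = -1} \<le> b * card {w\<in>nbhd V E u. f w = 1}"
  shows "a * card {v\<in>V. f v = -1} \<le> b * r * card {v\<in>V. f v = 1}"
proof -
  define P where "P = {v\<in>V. f v = 1}"
  define M where "M = {v\<in>V. f v = -1}"
  define U where "U = {u. tight V E f u}"
  have UV: "U \<subseteq> V" and PV: "P \<subseteq> V"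
    by (auto simp: U_def P_def tight_def)
  have fU: "finite U" using UV simple_graph_finite[OF g] finite_subset by blast
  have nbhd_M: "nbhd V E u \<inter> M = {w\<in>nbhd V E u. f w = -1}"
   and nbhd_P: "nbhd V E u \<inter> P = {w\<in>nbhd V E u. f w = 1}" for u
    by (auto simp: M_def P_def nbhd_def)
  have "M \<subseteq> (\<Union>u\<in>U. nbhd V E u \<inter> M)"
    using max_istdf_negative_in_tight_nbhd[OF g f max] by (auto simp: M_def U_def)
  then have "card M \<le> card (\<Union>u\<in>U. nbhd V E u \<inter> M)"
    using fU finite_nbhd[OF g] by (intro card_mono) auto
  also have "\<dots> \<le> (\<Sum>u\<in>U. card (nbhd V E u \<inter> M))"
    using fU by (rule card_UN_le)
  finally have "a * card M \<le> (\<Sum>u\<in>U. a * card (nbhd V E u \<inter> M))"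
    by (simp add: sum_distrib_left[symmetric])
  also have "\<dots> \<le> (\<Sum>u\<in>U. b * card (nbhd V E u \<inter> P))"
    using local by (intro sum_mono) (simp add: U_def nbhd_M nbhd_P)
  also have "\<dots> = b * (\<Sum>u\<in>U. card (nbhd V E u \<inter> P))"
    by (simp add: sum_distrib_left)
  also have "\<dots> = b * (\<Sum>w\<in>P. card (nbhd V E w \<inter> U))"
    using sum_nbhd_swap[OF g UV PV, of "\<lambda>_ _. 1 :: nat"] by simp
  also have "\<dots> \<le> b * (\<Sum>w\<in>P. card (nbhd V E w))"
    using finite_nbhd[OF g] by (intro mult_left_mono sum_mono card_mono) auto
  also have "\<dots> = b * r * card P"
    using reg PV by (simp add: regular_def subset_iff)
  finally show ?thesis by (simp add: P_def M_def)
qed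

lemma tight_even_balanced:
  assumes "simple_graph V E" "regular V E r" "istdf V E f" "tight V E f u" and "even r"
  shows "card {w\<in>nbhd V E u. f w = -1} \<le> card {w\<in>nbhd V E u. f w = 1}"
proof -
  obtain p m where "p = card {w\<in>nbhd V E u. f w = 1}" and "m = card {w\<in>nbhd V E u. f w = -1}"
    by blast
  moreover from this have "p + m = r" "p \<le> m" "m \<le> p + 1"
    using tight_nbhd_split[OF assms(1-4)] by simp_all
  then have "m \<le> p" using \<open>even r\<close> by presburger
  ultimately show ?thesis by simp
qed

lemma tight_odd_ratio:
  assumes "simple_graph V E" "regular V E r" "istdf V E f" "tight V E f u" and "odd r"
  shows "(r - 1) * card {w\<in>nbhd V E u. f w = -1} \<le> (r + 1) * card {w\<in>nbhd V E u. f w = 1}"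
proof -
  obtain p m where "p = card {w\<in>nbhd V E u. f w = 1}" and "m = card {w\<in>nbhd V E u. f w = -1}"
    by blast
  moreover from this have "p + m = r" "p \<le> m" "m \<le> p + 1"
    using tight_nbhd_split[OF assms(1-4)] by simp_all
  then have "m = p + 1" and "r = 2 * p + 1" using \<open>odd r\<close> by presburger+
  then have "(r - 1) * m = (r + 1) * p" by (simp add: algebra_simps)
  ultimately show ?thesis by simp
qed

lemma ratio_lower_bound:
  fixes a b p m :: real
  assumes "0 < a + b" and "a * m \<le> b * p"
  shows "(a - b) / (a + b) * (p + m) \<le> p - m"
proof -
  have "(a - b) * (p + m) \<le> (a + b) * (p - m)" using assms(2) by (simp add: algebra_simps)
  with assms(1) show ?thesis by (simp add: divide_le_eq mult.commute)
qed

lemma max_istdf_weight_lower_bound: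
  assumes g: "simple_graph V E" and reg: "regular V E r" and f: "istdf V E f"
    and max: "\<And>h. istdf V E h \<Longrightarrow> (\<Sum>v\<in>V. h v) \<le> (\<Sum>v\<in>V. f v)"
    and local: "\<And>u. tight V E f u \<Longrightarrow>
      a * card {w\<in>nbhd V E u. f w = -1} \<le> b * card {w\<in>nbhd V E u. f w = 1}"
    and pos: "0 < a + b * r"
  shows "(real a - real b * real r) / (real a + real b * real r) * real (card V)
    \<le> real_of_int (\<Sum>v\<in>V. f v)"
proof -
  have pm: "\<forall>v\<in>V. f v = 1 \<or> f v = -1" using istdf_plus_minus_one[OF f] by blast
  note parts = sum_plus_minus_one[OF simple_graph_finite[OF g] pm]
  define p where "p = real (card {v\<in>V. f v = 1})"
  define m where "m = real (card {v\<in>V. f v = -1})"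
  have n: "real (card V) = p + m" and wt: "real_of_int (\<Sum>v\<in>V. f v) = p - m"
    unfolding p_def m_def parts by simp_all
  have "a * card {v\<in>V. f v = -1} \<le> b * r * card {v\<in>V. f v = 1}"
    by (rule max_istdf_count[OF g reg f max local])
  then have "real (a * card {v\<in>V. f v = -1}) \<le> real (b * r * card {v\<in>V. f v = 1})"
    by (simp only: of_nat_le_iff)
  then have count: "real a * m \<le> (real b * real r) * p"
    by (simp only: p_def m_def of_nat_mult)
  have "0 < real (a + b * r)" using pos by (simp only: of_nat_0_less_iff)
  then have "0 < real a + real b * real r" by (simp only: of_nat_add of_nat_mult)
  from ratio_lower_bound[OF this count] show ?thesis
    unfolding n wt .
qed

lemma istd_number_nonpos:
  assumes "simple_graph V E" and "regular V E r" and "r \<ge> 1"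
  shows "istd_number V E \<le> 0"
proof -
  obtain f where "istdf V E f" and "istd_number V E = (\<Sum>v\<in>V. f v)"
    using istd_number_attained[OF assms(1)] by blast
  with regular_istdf_weight_nonpos[OF assms(1,2)] \<open>r \<ge> 1\<close> show ?thesis
    by (simp add: mult_le_0_iff)
qed

lemma istd_number_le_odd:
  assumes "simple_graph V E" and "regular V E r" and "odd r"
  shows "real_of_int (istd_number V E) \<le> - real (card V) / real r"
proof -
  obtain f where "istdf V E f" and w: "istd_number V E = (\<Sum>v\<in>V. f v)"
    using istd_number_attained[OF assms(1)] by blast
  with regular_odd_istdf_weight_le[OF assms(1,2)] \<open>odd r\<close>
  have "int r * istd_number V E \<le> - int (card V)" by simp
  then have "real_of_int (int r * istd_number V E) \<le> real_of_int (- int (card V))"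
    by (simp only: of_int_le_iff)
  then have "real r * real_of_int (istd_number V E) \<le> - real (card V)" by simp
  moreover have "0 < real r" using \<open>odd r\<close> by (simp add: odd_pos)
  ultimately show ?thesis by (subst pos_le_divide_eq) (simp_all add: mult.commute)
qed

lemma istd_number_ge_even:
  assumes g: "simple_graph V E" and reg: "regular V E r" and "even r"
  shows "(1 - real r) / (1 + real r) * real (card V) \<le> real_of_int (istd_number V E)"
proof -
  obtain f where f: "istdf V E f" and w: "istd_number V E = (\<Sum>v\<in>V. f v)"
    and max: "\<And>h. istdf V E h \<Longrightarrow> (\<Sum>v\<in>V. h v) \<le> (\<Sum>v\<in>V. f v)"
    using istd_number_attained[OF g] by blast
  have "(real 1 - real 1 * real r) / (real 1 + real 1 * real r) * real (card V)
      \<le> real_of_int (\<Sum>v\<in>V. f v)"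
    by (rule max_istdf_weight_lower_bound[OF g reg f max])
      (use tight_even_balanced[OF g reg f _ \<open>even r\<close>] in simp_all)
  then show ?thesis using w by simp
qed

lemma istd_number_ge_odd:
  assumes g: "simple_graph V E" and reg: "regular V E r" and "odd r"
  shows "- ((real r ^ 2 + 1) / (real r ^ 2 + 2 * real r - 1)) * real (card V)
    \<le> real_of_int (istd_number V E)"
proof -
  obtain f where f: "istdf V E f" and w: "istd_number V E = (\<Sum>v\<in>V. f v)"
    and max: "\<And>h. istdf V E h \<Longrightarrow> (\<Sum>v\<in>V. h v) \<le> (\<Sum>v\<in>V. f v)"
    using istd_number_attained[OF g] by blast
  have r: "r \<ge> 1" using \<open>odd r\<close> by (simp add: odd_pos Suc_le_eq)
  have lower: "(real (r - 1) - real (r + 1) * real r) / (real (r - 1) + real (r + 1) * real r)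
      * real (card V) \<le> real_of_int (\<Sum>v\<in>V. f v)"
    by (rule max_istdf_weight_lower_bound[OF g reg f max])
      (use tight_odd_ratio[OF g reg f _ \<open>odd r\<close>] r in simp_all)
  have num: "real (r - 1) - real (r + 1) * real r = - (real r ^ 2 + 1)"
    and den: "real (r - 1) + real (r + 1) * real r = real r ^ 2 + 2 * real r - 1"
    using r by (simp_all add: of_nat_diff power2_eq_square algebra_simps)
  show ?thesis
    using lower[unfolded num den] w by (simp only: minus_divide_left)
qed

theorem theorem3p2:
  fixes V :: "'a set" and E :: "'a \<Rightarrow> 'a \<Rightarrow> bool" and r :: nat
  assumes "simple_graph V E" and "regular V E r" and "r \<ge> 1"
  shows "(even r \<longrightarrow>
            (1 - real r) / (1 + real r) * real (card V) \<le> real_of_int (istd_number V E)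
            \<and> istd_number V E \<le> 0)
       \<and> (odd r \<longrightarrow>
            - ((real r ^ 2 + 1) / (real r ^ 2 + 2 * real r - 1)) * real (card V)
               \<le> real_of_int (istd_number V E)
            \<and> real_of_int (istd_number V E) \<le> - real (card V) / real r)"
  using istd_number_ge_even[OF assms(1,2)] istd_number_nonpos[OF assms]
    istd_number_ge_odd[OF assms(1,2)] istd_number_le_odd[OF assms(1,2)]
  by blast

end
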